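(* Let $V$ be a vector configuration and $W\subseteq V$ a subconfiguration such that $\operatorname{lin}(W)\cap V=W$. Then the following three equalities are equivalent: (i) $\mathrm{DD}(V)=\mathrm{DD}(W)+\mathrm{DD}(V/W)$; (ii) $\deg^*(V)=\deg^*(W)+\deg^*(V/W)$; (iii) $\operatorname{codeg}^*(V)=\operatorname{codeg}^*(W)+\operatorname{codeg}^*(V/W)$.
   Context: A vector configuration is a finite family (repetitions allowed) $U$ of vectors in a real vector space $E$; a subconfiguration is a subfamily, $\operatorname{rank}(U)=\dim\operatorname{lin}(U)$, cardinalities count multiplicities. The quotient $V/W$ is the configuration in $E/\operatorname{lin}(W)$ of the images of the elements of $V\setminus W$. For a nonzero linear functional $f$ on $E$, the oriented linear hyperplane $H=\{f=0\}$ has $H^+=\{f>0\}$, $\overline{H}^-=\{f\le0\}$. Dual codegree: $\operatorname{codeg}^*(U)=\min_H|\overline{H}^-\cap U|$; dual degree: $\deg^*(U)=\max_H|H^+\cap U|-\operatorname{rank}(U)$, over oriented linear hyperplanes $H$. Covector discrepancy: $\mathrm{DD}(U)=\max_f\big|\,|\{u: f(u)>0\}|-|\{u:f(u)<0\}|\,\big|$ over all linear functionals $f$. *)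

theory Defs
  imports "HOL-Analysis.Analysis"
begin

text \<open>A vector configuration is a finite family of vectors, modelled as a finite
index set I together with a map v : I -> E (repetitions = distinct indices with
the same vector).  A subconfiguration is a subset J of I.  Linear functionals are
linear maps E -> real; an oriented linear hyperplane is given by a nonzero one.\<close>

definition covector_discrepancy :: "'i set \<Rightarrow> ('i \<Rightarrow> 'a::euclidean_space) \<Rightarrow> nat" where
  "covector_discrepancy I v =
     Sup {nat \<bar>int (card {i\<in>I. f (v i) > 0}) - int (card {i\<in>I. f (v i) < 0})\<bar>
          | f :: 'a \<Rightarrow> real. linear f}"

definition dual_codegree :: "'i set \<Rightarrow> ('i \<Rightarrow> 'a::euclidean_space) \<Rightarrow> nat" where
  "dual_codegree I v =
     Inf {card {i\<in>I. f (v i) \<le> 0} | f :: 'a \<Rightarrow> real. linear f \<and> (\<exists>x. f x \<noteq> 0)}"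

definition config_rank :: "'i set \<Rightarrow> ('i \<Rightarrow> 'a::euclidean_space) \<Rightarrow> nat" where
  "config_rank I v = dim (span (v ` I))"

definition dual_degree :: "'i set \<Rightarrow> ('i \<Rightarrow> 'a::euclidean_space) \<Rightarrow> int" where
  "dual_degree I v =
     int (Sup {card {i\<in>I. f (v i) > 0} | f :: 'a \<Rightarrow> real. linear f \<and> (\<exists>x. f x \<noteq> 0)})
     - int (config_rank I v)"

end

theory Submission
  imports Defs
begin

text \<open>All three quantities are affine in the dual codegree:
  \<open>DD(V) = |V| + #{zero vectors} - 2 codeg*(V)\<close> and \<open>deg*(V) = |V| - codeg*(V) - rank(V)\<close>.
  Cardinality and rank are additive along \<open>W \<subseteq> V \<rightarrow> V/W\<close>, and so is the number of zero
  vectors, because they all lie in \<open>lin(W) \<inter> V = W\<close> while \<open>V/W\<close> has none. Hence each of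
  the three equalities says exactly that the dual codegree is additive.

  For the formula for \<open>DD\<close>, a hyperplane attaining \<open>codeg*\<close> gives a lower bound. Conversely,
  any functional \<open>f\<close> can be perturbed to \<open>f + t\<langle>\<plusminus>w, -\<rangle>\<close> with \<open>t\<close> small and \<open>w\<close>
  orthogonal to no nonzero vector of the configuration; averaging over the two signs, the nonzero
  vectors on the hyperplane \<open>f = 0\<close> contribute half their number, which is the upper bound.\<close>

lemma exists_not_orthogonal:
  fixes S :: "'a::euclidean_space set"
  assumes "finite S" "0 \<notin> S"
  obtains w where "w \<noteq> 0" "\<And>u. u \<in> S \<Longrightarrow> w \<bullet> u \<noteq> 0"
proof -
  have "negligible (insert 0 (\<Union>u\<in>S. {w. u \<bullet> w = 0}))"
    using assms by (auto intro!: negligible_hyperplane)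
  then obtain w where "w \<notin> insert 0 (\<Union>u\<in>S. {w. u \<bullet> w = 0})"
    using non_negligible_UNIV by (metis UNIV_eq_I)
  then show thesis by (intro that) (auto simp: inner_commute)
qed

lemma exists_small_scale:
  fixes a c :: "'x \<Rightarrow> real"
  assumes "finite X" "\<And>x. x \<in> X \<Longrightarrow> c x \<noteq> 0"
  obtains t where "t > 0" "\<And>x. x \<in> X \<Longrightarrow> t * \<bar>a x\<bar> < \<bar>c x\<bar>"
proof
  define t where "t = Min (insert 1 ((\<lambda>x. \<bar>c x\<bar> / (\<bar>a x\<bar> + 1)) ` X))"
  show "t > 0" using assms by (auto simp: t_def)
  fix x assume "x \<in> X"
  then have "t \<le> \<bar>c x\<bar> / (\<bar>a x\<bar> + 1)" using assms(1) by (auto simp: t_def)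
  then have "t * \<bar>a x\<bar> \<le> \<bar>c x\<bar> / (\<bar>a x\<bar> + 1) * \<bar>a x\<bar>" by (rule mult_right_mono) simp
  also have "\<dots> < \<bar>c x\<bar>" using assms(2)[OF \<open>x \<in> X\<close>] by (simp add: field_simps)
  finally show "t * \<bar>a x\<bar> < \<bar>c x\<bar>" .
qed

lemma eq_add_iff_diff_diff_eq_0: "a = b + c \<longleftrightarrow> a - b - c = (0::'a::ab_group_add)"
  by (simp add: algebra_simps)

lemma card_pos_add_card_nonpos:
  fixes g :: "'i \<Rightarrow> 'b::{linorder, zero}"
  assumes "finite I"
  shows "card {i\<in>I. g i > 0} + card {i\<in>I. g i \<le> 0} = card I"
  using assms by (subst card_Un_disjoint[symmetric]) (auto intro: arg_cong[where f = card])

lemma card_nonpos_eq: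
  fixes g :: "'i \<Rightarrow> 'b::{linorder, zero}"
  assumes "finite I"
  shows "card {i\<in>I. g i \<le> 0} = card {i\<in>I. g i < 0} + card {i\<in>I. g i = 0}"
  using assms by (subst card_Un_disjoint[symmetric]) (auto intro: arg_cong[where f = card])

lemma dual_codegree_le:
  fixes v :: "'i \<Rightarrow> 'a::euclidean_space" and f :: "'a \<Rightarrow> real"
  assumes "linear f" "f x \<noteq> 0"
  shows "dual_codegree I v \<le> card {i\<in>I. f (v i) \<le> 0}"
  unfolding dual_codegree_def by (rule cInf_lower) (use assms in blast, simp)

lemma dual_codegree_attained:
  fixes v :: "'i \<Rightarrow> 'a::euclidean_space"
  obtains f :: "'a \<Rightarrow> real"
  where "linear f" "\<exists>x. f x \<noteq> 0" "card {i\<in>I. f (v i) \<le> 0} = dual_codegree I v"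
proof -
  obtain b :: 'a where "b \<in> Basis" using nonempty_Basis by blast
  then have "linear (inner b) \<and> (\<exists>x. b \<bullet> x \<noteq> 0)"
    using bounded_linear.linear[OF bounded_linear_inner_right] by (metis inner_eq_zero_iff nonzero_Basis)
  then have "dual_codegree I v \<in>
      {card {i\<in>I. f (v i) \<le> 0} | f :: 'a \<Rightarrow> real. linear f \<and> (\<exists>x. f x \<noteq> 0)}"
    unfolding dual_codegree_def by (intro Inf_nat_def1) blast
  then obtain f :: "'a \<Rightarrow> real"
    where "linear f" "\<exists>x. f x \<noteq> 0" "dual_codegree I v = card {i\<in>I. f (v i) \<le> 0}"
    by blast
  then show thesis by (intro that) simp_all
qed

lemma dual_codegree_le_lexicographic:
  fixes v :: "'i \<Rightarrow> 'a::euclidean_space" and f :: "'a \<Rightarrow> real"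
  assumes "finite I" "linear f" "w \<noteq> 0"
  shows "dual_codegree I v \<le> card {i\<in>I. f (v i) < 0 \<or> f (v i) = 0 \<and> w \<bullet> v i \<le> 0}"
proof -
  define X where "X = {x \<in> insert w (v ` I). f x \<noteq> 0}"
  \<comment> \<open>Putting \<open>w\<close> into \<open>X\<close> makes \<open>g w \<noteq> 0\<close>, so \<open>g\<close> defines a hyperplane.\<close>
  have "finite X"
    using assms(1) by (intro finite_subset[of X "insert w (v ` I)"]) (auto simp: X_def)
  moreover have "\<And>x. x \<in> X \<Longrightarrow> f x \<noteq> 0" by (simp add: X_def)
  ultimately obtain t where t: "t > 0" "\<And>x. x \<in> X \<Longrightarrow> t * \<bar>w \<bullet> x\<bar> < \<bar>f x\<bar>"
    using exists_small_scale[of X f "inner w"] by blast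
  define g where "g x = f x + t * (w \<bullet> x)" for x
  have dominated: "\<bar>t * (w \<bullet> x)\<bar> < \<bar>f x\<bar>" if "x \<in> insert w (v ` I)" "f x \<noteq> 0" for x
    using t that unfolding X_def abs_mult by simp
  have sign: "g x \<le> 0 \<longleftrightarrow> f x < 0 \<or> f x = 0 \<and> w \<bullet> x \<le> 0" if "x \<in> insert w (v ` I)" for x
  proof (cases "f x = 0")
    case True
    then show ?thesis using t(1) by (simp add: g_def mult_le_0_iff)
  next
    case False
    then show ?thesis using dominated[OF that False] unfolding g_def by linarith
  qed
  have "linear g"
    using linear_compose_add[OF assms(2) linear_compose_scale_right[OF
        bounded_linear_inner_right[THEN bounded_linear.linear]], of t w]
    by (simp add: g_def[abs_def])
  moreover have "g w \<noteq> 0"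
  proof (cases "f w = 0")
    case True
    then show ?thesis using t(1) assms(3) by (simp add: g_def)
  next
    case False
    then show ?thesis using dominated[of w] by (auto simp: g_def)
  qed
  ultimately have "dual_codegree I v \<le> card {i\<in>I. g (v i) \<le> 0}" by (rule dual_codegree_le)
  also have "{i\<in>I. g (v i) \<le> 0} = {i\<in>I. f (v i) < 0 \<or> f (v i) = 0 \<and> w \<bullet> v i \<le> 0}"
    using sign by blast
  finally show ?thesis .
qed

lemma two_dual_codegree_le:
  fixes v :: "'i \<Rightarrow> 'a::euclidean_space" and f :: "'a \<Rightarrow> real"
  assumes "finite I" "linear f"
  shows "2 * dual_codegree I v
    \<le> card {i\<in>I. f (v i) \<le> 0} + card {i\<in>I. f (v i) < 0} + card {i\<in>I. v i = 0}"
proof -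
  obtain w where w: "w \<noteq> 0" "\<And>u. u \<in> v ` {i\<in>I. v i \<noteq> 0} \<Longrightarrow> w \<bullet> u \<noteq> 0"
    by (rule exists_not_orthogonal[of "v ` {i\<in>I. v i \<noteq> 0}"]) (use assms(1) in auto)
  define L where "L u = {i\<in>I. f (v i) < 0 \<or> f (v i) = 0 \<and> u \<bullet> v i \<le> 0}" for u
  \<comment> \<open>Each nonzero vector on \<open>f = 0\<close> lies in exactly one of \<open>L w\<close>, \<open>L (- w)\<close>.\<close>
  have "L w \<union> L (- w) = {i\<in>I. f (v i) \<le> 0}"
    by (auto simp: L_def)
  moreover have "L w \<inter> L (- w) = {i\<in>I. f (v i) < 0} \<union> {i\<in>I. v i = 0}"
    using w(2) linear_0[OF assms(2)] by (fastforce simp: L_def)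
  moreover have "card ({i\<in>I. f (v i) < 0} \<union> {i\<in>I. v i = 0})
      = card {i\<in>I. f (v i) < 0} + card {i\<in>I. v i = 0}"
    using assms(1) linear_0[OF assms(2)] by (intro card_Un_disjoint) auto
  ultimately have sum: "card (L w) + card (L (- w))
      = card {i\<in>I. f (v i) \<le> 0} + card {i\<in>I. f (v i) < 0} + card {i\<in>I. v i = 0}"
    using card_Un_Int[of "L w" "L (- w)"] assms(1) by (simp add: L_def)
  have "dual_codegree I v \<le> card (L u)" if "u \<noteq> 0" for u
    unfolding L_def by (rule dual_codegree_le_lexicographic[OF assms that])
  then have "dual_codegree I v \<le> card (L w)" "dual_codegree I v \<le> card (L (- w))"
    using w(1) by simp_all
  with sum show ?thesis by linarith
qed

lemma covector_discrepancy_eq: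
  fixes v :: "'i \<Rightarrow> 'a::euclidean_space"
  assumes "finite I"
  shows "int (covector_discrepancy I v)
    = int (card I) + int (card {i\<in>I. v i = 0}) - 2 * int (dual_codegree I v)"
proof -
  define B where "B = int (card I) + int (card {i\<in>I. v i = 0}) - 2 * int (dual_codegree I v)"
  define D where "D f = int (card {i\<in>I. f (v i) > 0}) - int (card {i\<in>I. f (v i) < 0})"
    for f :: "'a \<Rightarrow> real"
  note split = card_pos_add_card_nonpos[OF assms, of "\<lambda>i. f (v i)" for f :: "'a \<Rightarrow> real"]
  have upper: "D f \<le> B" if "linear f" for f
    using two_dual_codegree_le[OF assms that, of v] split[of f]
    unfolding D_def B_def by linarith
  have abs_upper: "\<bar>D f\<bar> \<le> B" if "linear f" for f
  proof -
    have "D (\<lambda>x. - f x) = - D f" by (simp add: D_def)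
    then show ?thesis using upper[OF that] upper[OF linear_compose_neg[OF that]] by linarith
  qed
  obtain f0 :: "'a \<Rightarrow> real"
    where f0: "linear f0" "\<exists>x. f0 x \<noteq> 0" "card {i\<in>I. f0 (v i) \<le> 0} = dual_codegree I v"
    by (rule dual_codegree_attained)
  note card_nonpos_eq[OF assms, of "\<lambda>i. f0 (v i)"]
  moreover have "card {i\<in>I. v i = 0} \<le> card {i\<in>I. f0 (v i) = 0}"
    using assms linear_0[OF f0(1)] by (intro card_mono) auto
  ultimately have "B \<le> D f0"
    using split[of f0] f0(3)
    unfolding B_def D_def by linarith
  then have attained: "\<bar>D f0\<bar> = B" using abs_upper[OF f0(1)] by linarith
  have "covector_discrepancy I v = nat B"
    unfolding covector_discrepancy_def D_def[symmetric]
  proof (rule cSup_eq_maximum)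
    show "nat B \<in> {nat \<bar>D f\<bar> | f. linear f}" unfolding attained[symmetric] using f0(1) by blast
    show "y \<le> nat B" if "y \<in> {nat \<bar>D f\<bar> | f. linear f}" for y
      using that abs_upper by (auto intro: nat_mono)
  qed
  then show ?thesis using attained unfolding B_def by linarith
qed

lemma dual_degree_eq:
  fixes v :: "'i \<Rightarrow> 'a::euclidean_space"
  assumes "finite I"
  shows "dual_degree I v = int (card I) - int (dual_codegree I v) - int (config_rank I v)"
proof -
  note split = card_pos_add_card_nonpos[OF assms, of "\<lambda>i. f (v i)" for f :: "'a \<Rightarrow> real"]
  obtain f0 :: "'a \<Rightarrow> real"
    where f0: "linear f0" "\<exists>x. f0 x \<noteq> 0" "card {i\<in>I. f0 (v i) \<le> 0} = dual_codegree I v"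
    by (rule dual_codegree_attained)
  have "Sup {card {i\<in>I. f (v i) > 0} | f :: 'a \<Rightarrow> real. linear f \<and> (\<exists>x. f x \<noteq> 0)}
      = card I - dual_codegree I v"
  proof (rule cSup_eq_maximum)
    have "card I - dual_codegree I v = card {i\<in>I. f0 (v i) > 0}"
      using split[of f0] f0(3) by linarith
    then show "card I - dual_codegree I v
        \<in> {card {i\<in>I. f (v i) > 0} | f :: 'a \<Rightarrow> real. linear f \<and> (\<exists>x. f x \<noteq> 0)}"
      using f0(1,2) by blast
  next
    fix y
    assume "y \<in> {card {i\<in>I. f (v i) > 0} | f :: 'a \<Rightarrow> real. linear f \<and> (\<exists>x. f x \<noteq> 0)}"
    then obtain f :: "'a \<Rightarrow> real" and x
      where "linear f" "f x \<noteq> 0" "y = card {i\<in>I. f (v i) > 0}" by blast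
    then show "y \<le> card I - dual_codegree I v"
      using split[of f] dual_codegree_le[of f x I v] by linarith
  qed
  moreover have "dual_codegree I v \<le> card I"
    using split[of f0] f0(3) by linarith
  ultimately show ?thesis by (simp add: dual_degree_def)
qed

lemma dim_eq_dim_kernel_add_dim_image:
  fixes q :: "'a::euclidean_space \<Rightarrow> 'b::euclidean_space"
  assumes "linear q" "subspace B"
  shows "dim B = dim {x\<in>B. q x = 0} + dim (q ` B)"
proof -
  define A where "A = {x\<in>B. q x = 0}"
  define C where "C = {y\<in>B. \<forall>x\<in>A. orthogonal x y}"
  have "subspace A"
    using subspace_inter[OF assms(2) linear_subspace_kernel[OF assms(1)]]
    by (simp add: A_def Collect_conj_eq)
  then have "span A = A" by simp
  have "subspace C"
    using subspace_inter[OF assms(2) subspace_orthogonal_to_vectors[of A]]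
    by (simp add: C_def Collect_conj_eq)
  then have "span C = C" by simp
  have "dim C + dim A = dim B"
    unfolding C_def using \<open>subspace A\<close> assms(2)
    by (rule dim_subspace_orthogonal_to_vectors) (simp add: A_def)
  moreover have "dim (q ` C) = dim C"
  proof (rule dim_image_eq[OF assms(1)])
    have "inj_on q C"
      unfolding linear_injective_on_subspace_0[OF assms(1) \<open>subspace C\<close>]
      by (auto simp: C_def A_def orthogonal_def)
    then show "inj_on q (span C)" by (simp only: \<open>span C = C\<close>)
  qed
  moreover have "q ` B \<subseteq> q ` C"
  proof
    fix b assume "b \<in> q ` B"
    then obtain x where "x \<in> B" "b = q x" by auto
    obtain y z where "y \<in> span A" and z: "\<And>u. u \<in> span A \<Longrightarrow> orthogonal z u" and "x = y + z"
      using orthogonal_subspace_decomp_exists[of A x] by metis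
    then have "y \<in> A" by (simp only: \<open>span A = A\<close>)
    then have "y \<in> B" "q y = 0" by (simp_all add: A_def)
    have "z \<in> B"
      using subspace_diff[OF assms(2) \<open>x \<in> B\<close> \<open>y \<in> B\<close>] \<open>x = y + z\<close> by simp
    moreover have "orthogonal u z" if "u \<in> A" for u
      using z[of u] that \<open>span A = A\<close> by (simp add: orthogonal_commute)
    ultimately have "z \<in> C" by (simp add: C_def)
    moreover have "q x = q z"
      using \<open>x = y + z\<close> \<open>q y = 0\<close> linear_add[OF assms(1)] by simp
    ultimately show "b \<in> q ` C" using \<open>b = q x\<close> by blast
  qed
  then have "q ` C = q ` B" by (auto simp: C_def)
  ultimately show ?thesis by (simp add: A_def)
qed

lemma config_rank_quotient:
  fixes v :: "'i \<Rightarrow> 'a::euclidean_space" and q :: "'a \<Rightarrow> 'b::euclidean_space"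
  assumes "J \<subseteq> I" "linear q" "\<And>x. q x = 0 \<longleftrightarrow> x \<in> span (v ` J)"
  shows "config_rank I v = config_rank J v + config_rank (I - J) (q \<circ> v)"
proof -
  have "span (v ` J) \<subseteq> span (v ` I)" using assms(1) by (intro span_mono image_mono)
  then have "{x \<in> span (v ` I). q x = 0} = span (v ` J)" using assms(3) by blast
  moreover have "span (q ` v ` I) = span ((q \<circ> v) ` (I - J))"
    unfolding span_eq
  proof
    show "q ` v ` I \<subseteq> span ((q \<circ> v) ` (I - J))"
    proof
      fix u assume "u \<in> q ` v ` I"
      then obtain i where "i \<in> I" "u = q (v i)" by blast
      then show "u \<in> span ((q \<circ> v) ` (I - J))"
        using assms(3)[of "v i"] span_zero span_base[of "(q \<circ> v) i" "(q \<circ> v) ` (I - J)"]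
        by (cases "i \<in> J") (auto intro: span_base)
    qed
    show "(q \<circ> v) ` (I - J) \<subseteq> span (q ` v ` I)" by (auto intro: span_base)
  qed
  ultimately show ?thesis
    using dim_eq_dim_kernel_add_dim_image[OF assms(2) subspace_span, of "v ` I"]
    by (simp add: config_rank_def span_linear_image[OF assms(2)])
qed

theorem mainTheorem12:
  fixes I J :: "'i set" and v :: "'i \<Rightarrow> 'a::euclidean_space"
    and q :: "'a \<Rightarrow> 'b::euclidean_space"
  assumes "finite I" and "J \<subseteq> I"
    and "\<forall>i\<in>I. v i \<in> span (v ` J) \<longrightarrow> i \<in> J"
    and "linear q" and "\<forall>x. q x = 0 \<longleftrightarrow> x \<in> span (v ` J)"
  shows "(covector_discrepancy I v = covector_discrepancy J v + covector_discrepancy (I - J) (q \<circ> v)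
          \<longleftrightarrow> dual_degree I v = dual_degree J v + dual_degree (I - J) (q \<circ> v))
       \<and> (dual_degree I v = dual_degree J v + dual_degree (I - J) (q \<circ> v)
          \<longleftrightarrow> dual_codegree I v = dual_codegree J v + dual_codegree (I - J) (q \<circ> v))"
proof -
  have "finite J" "finite (I - J)" using assms(1,2) finite_subset by auto
  have card: "card I = card J + card (I - J)"
    using card_Un_disjoint[OF \<open>finite J\<close> \<open>finite (I - J)\<close>] assms(2) by (simp add: Un_absorb1)
  have zeros: "{i\<in>I. v i = 0} = {i\<in>J. v i = 0}"
    using assms(2,3) span_zero by force
  have no_zeros: "{i\<in>I - J. (q \<circ> v) i = 0} = {}"
    using assms(3,5) by auto
  define d where "d = int (dual_codegree I v) - int (dual_codegree J v)
    - int (dual_codegree (I - J) (q \<circ> v))"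
  have "int (covector_discrepancy I v) - int (covector_discrepancy J v)
      - int (covector_discrepancy (I - J) (q \<circ> v)) = - 2 * d"
    using covector_discrepancy_eq[OF assms(1), of v] covector_discrepancy_eq[OF \<open>finite J\<close>, of v]
      covector_discrepancy_eq[OF \<open>finite (I - J)\<close>, of "q \<circ> v"] card
    unfolding zeros no_zeros d_def by simp
  moreover have "dual_degree I v - dual_degree J v - dual_degree (I - J) (q \<circ> v) = - d"
    using dual_degree_eq[OF assms(1), of v] dual_degree_eq[OF \<open>finite J\<close>, of v]
      dual_degree_eq[OF \<open>finite (I - J)\<close>, of "q \<circ> v"] card
      config_rank_quotient[OF assms(2,4) assms(5)[rule_format]]
    unfolding d_def by simp
  ultimately show ?thesis
    unfolding of_nat_eq_iff[where 'a = int, symmetric] of_nat_add eq_add_iff_diff_diff_eq_0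
    by (simp flip: d_def)
qed

end
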